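(* Fix constants $\alpha>0$ and $k'>0$. For each $n$ let $m=\alpha n$ (assumed integer) and let $\mathbf{h_1},\dots,\mathbf{h_n}\in\mathbb{R}^m$ be independent with i.i.d. $\mathcal{N}(0,1)$ entries. Then there exist $n_0$ and $a>0$ such that for all $n>n_0$, every integer $i$ with $k'n<i\le n$, and all deterministic coefficients $c_1,\dots,c_n$ with $c_j\in[1,2]$ for $j\le i$ and $c_j\in[0,1]$ for $j>i$, \[P\Big(\Big\|\sum_{j=1}^n c_j\mathbf{h_j}\Big\|_2^2<a\,n\log n\Big)\le \exp(-a\,n\log n).\] *)

theory Defs
  imports "HOL-Probability.Probability"
begin

definition std_gaussian :: "real measure" where
  "std_gaussian = density lborel std_normal_density"

text \<open>Joint law of h_1,...,h_n in R^m with i.i.d. N(0,1) entries: an outcome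
  is a function w with w (j, r) the r-th coordinate of h_j (1 <= j <= n, 1 <= r <= m).\<close>
definition gaussian_vectors :: "nat \<Rightarrow> nat \<Rightarrow> (nat \<times> nat \<Rightarrow> real) measure" where
  "gaussian_vectors n m = PiM ({1..n} \<times> {1..m}) (\<lambda>_. std_gaussian)"

end

theory Submission
  imports Defs
begin

text \<open>The vector \<open>Y = \<Sum>\<^sub>j c\<^sub>j h\<^sub>j\<close> has \<open>m\<close> independent \<open>N(0, s\<^sup>2)\<close> coordinates
  with \<open>s\<^sup>2 = \<Sum>\<^sub>j c\<^sub>j\<^sup>2 \<ge> i > k'n\<close>, and \<open>E exp(-\<lambda> Y\<^sub>r\<^sup>2) = (1 + 2\<lambda>s\<^sup>2)\<^sup>-\<^sup>1\<^sup>/\<^sup>2\<close>.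
  Chernoff's bound with \<open>\<lambda> = n/s\<^sup>2\<close> gives
  \<open>P(\<parallel>Y\<parallel>\<^sup>2 \<le> T) \<le> exp(\<lambda>T) (1 + 2n)\<^sup>-\<^sup>m\<^sup>/\<^sup>2 \<le> exp(T/k') n\<^sup>-\<^sup>\<alpha>\<^sup>n\<^sup>/\<^sup>2\<close>, and for
  \<open>T = a n log n\<close> with \<open>a = \<alpha>k'/(2(k'+1))\<close> this is \<open>exp(-a n log n)\<close> for every \<open>n \<ge> 1\<close>,
  so \<open>n0 = 0\<close> works.\<close>

lemma sets_std_gaussian [measurable_cong]: "sets std_gaussian = sets borel"
  by (simp add: std_gaussian_def)

lemma prob_space_std_gaussian: "prob_space std_gaussian"
  unfolding std_gaussian_def by (rule prob_space_normal_density) simp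

lemma prob_space_PiM_std_gaussian: "finite D \<Longrightarrow> prob_space (PiM D (\<lambda>_. std_gaussian))"
  by (intro prob_space_PiM prob_space_std_gaussian)

lemma indep_vars_coordinates:
  assumes D: "finite D" and e: "inj_on e J" "e \<in> J \<rightarrow> D"
  shows "prob_space.indep_vars (PiM D (\<lambda>_. std_gaussian)) (\<lambda>_. std_gaussian) (\<lambda>j w. w (e j)) J"
proof -
  interpret prob_space "PiM D (\<lambda>_. std_gaussian)" using prob_space_PiM_std_gaussian[OF D] .
  have rv: "random_variable std_gaussian (\<lambda>w. w (e j))" if "j \<in> J" for j
    using e that by (auto intro!: measurable_component_singleton)
  have distr_coordinate:
    "distr (PiM D (\<lambda>_. std_gaussian)) std_gaussian (\<lambda>w. w (e j)) = std_gaussian" if "j \<in> J" for j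
    using e that by (intro distr_PiM_component prob_space_std_gaussian) auto
  have distr_eq: "distr (PiM D (\<lambda>_. std_gaussian)) (\<Pi>\<^sub>M j\<in>J. std_gaussian) (\<lambda>w. \<lambda>j\<in>J. w (e j)) =
      (\<Pi>\<^sub>M j\<in>J. distr (PiM D (\<lambda>_. std_gaussian)) std_gaussian (\<lambda>w. w (e j)))"
    using distr_PiM_reindex[of D "\<lambda>_. std_gaussian" e J] prob_space_std_gaussian e distr_coordinate
    by (simp cong: PiM_cong)
  show ?thesis
  proof (cases "J = {}")
    case False
    then show ?thesis using indep_vars_iff_distr_eq_PiM'[OF False rv] distr_eq by simp
  qed (simp add: indep_vars_def indep_sets_def)
qed

lemma distributed_coordinate:
  assumes "finite D" and "x \<in> D"
  shows "distributed (PiM D (\<lambda>_. std_gaussian)) lborel (\<lambda>w. w x) std_normal_density"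
proof -
  have "distr (PiM D (\<lambda>_. std_gaussian)) lborel (\<lambda>w. w x)
      = distr (PiM D (\<lambda>_. std_gaussian)) std_gaussian (\<lambda>w. w x)"
    by (rule distr_cong) (auto simp: std_gaussian_def)
  also have "\<dots> = std_gaussian"
    using assms by (intro distr_PiM_component prob_space_std_gaussian) auto
  finally show ?thesis
    unfolding distributed_def using assms
    by (auto simp: std_gaussian_def intro!: measurable_component_singleton)
qed

lemma borel_measurable_column_sum:
  assumes "\<And>j. j \<in> J \<Longrightarrow> (j, r) \<in> D"
  shows "(\<lambda>w. \<Sum>j\<in>J. c j * w (j, r)) \<in> borel_measurable (PiM D (\<lambda>_. std_gaussian))"
  using assms
  by (intro borel_measurable_sum borel_measurable_times borel_measurable_const)
     (auto intro: measurable_compose[OF measurable_component_singleton])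

lemma distributed_column_sum:
  assumes D: "finite D" and J: "finite J" "J \<noteq> {}" and sub: "\<And>j. j \<in> J \<Longrightarrow> (j, r) \<in> D"
    and c: "\<And>j. j \<in> J \<Longrightarrow> c j \<noteq> 0"
  shows "distributed (PiM D (\<lambda>_. std_gaussian)) lborel (\<lambda>w. \<Sum>j\<in>J. c j * w (j, r))
           (normal_density 0 (sqrt (\<Sum>j\<in>J. (c j)\<^sup>2)))"
proof -
  interpret prob_space "PiM D (\<lambda>_. std_gaussian)" using prob_space_PiM_std_gaussian[OF D] .
  have "indep_vars (\<lambda>_. std_gaussian) (\<lambda>j w. w (j, r)) J"
    using indep_vars_coordinates[OF D, of "\<lambda>j. (j, r)"] sub by (auto simp: inj_on_def)
  then have indep: "indep_vars (\<lambda>_. borel) (\<lambda>j w. c j * w (j, r)) J"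
    using indep_vars_compose2[of _ _ J "\<lambda>j x. c j * x" "\<lambda>_. borel"] by simp
  have "distributed (PiM D (\<lambda>_. std_gaussian)) lborel (\<lambda>w. c j * w (j, r)) (normal_density 0 \<bar>c j\<bar>)"
    if "j \<in> J" for j
    using normal_density_affine[OF distributed_coordinate[OF D sub[OF that]], of "c j" 0] c[OF that]
    by simp
  then have "distributed (PiM D (\<lambda>_. std_gaussian)) lborel (\<lambda>w. \<Sum>j\<in>J. c j * w (j, r))
           (normal_density (\<Sum>j\<in>J. 0) (sqrt (\<Sum>j\<in>J. \<bar>c j\<bar>\<^sup>2)))"
    using c by (intro sum_indep_normal[OF J indep]) auto
  then show ?thesis by simp
qed

lemma indep_vars_column_sums:
  assumes D: "finite D" and JR: "J \<times> R \<subseteq> D"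
  shows "prob_space.indep_vars (PiM D (\<lambda>_. std_gaussian)) (\<lambda>_. borel)
           (\<lambda>r w. \<Sum>j\<in>J. c j * w (j, r)) R"
proof -
  interpret prob_space "PiM D (\<lambda>_. std_gaussian)" using prob_space_PiM_std_gaussian[OF D] .
  have "indep_vars (\<lambda>_. std_gaussian) (\<lambda>x w. w (id x)) D"
    by (rule indep_vars_coordinates[OF D]) auto
  then have columns: "indep_vars (\<lambda>r. PiM (J \<times> {r}) (\<lambda>_. std_gaussian))
      (\<lambda>r w. restrict (\<lambda>x. w (id x)) (J \<times> {r})) R"
    using JR by (intro indep_vars_restrict) (auto simp: disjoint_family_on_def)
  have "indep_vars (\<lambda>_. borel)
      (\<lambda>r w. (\<lambda>f. \<Sum>j\<in>J. c j * f (j, r)) (restrict (\<lambda>x. w (id x)) (J \<times> {r}))) R"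
    by (rule indep_vars_compose2[OF columns borel_measurable_column_sum]) simp
  moreover have "(\<Sum>j\<in>J. c j * restrict (\<lambda>x. w (id x)) (J \<times> {r}) (j, r)) = (\<Sum>j\<in>J. c j * w (j, r))"
    for w :: "_ \<Rightarrow> real" and r
    by (intro sum.cong) auto
  ultimately show ?thesis by simp
qed

lemma nn_integral_normal_density_exp_neg_square:
  assumes s: "\<sigma> > 0" and l: "l \<ge> 0"
  shows "(\<integral>\<^sup>+y. ennreal (normal_density 0 \<sigma> y) * ennreal (exp (- l * y\<^sup>2)) \<partial>lborel)
     = ennreal (1 / sqrt (1 + 2 * l * \<sigma>\<^sup>2))"
proof -
  define q where "q = sqrt (1 + 2 * l * \<sigma>\<^sup>2)"
  have q: "q > 0" "q\<^sup>2 = 1 + 2 * l * \<sigma>\<^sup>2" using s l by (auto simp: q_def add_pos_nonneg)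
  define t where "t = \<sigma> / q"
  have t: "t > 0" using s q by (simp add: t_def)
  have density_product: "normal_density 0 \<sigma> y * exp (- l * y\<^sup>2) = (1/q) * normal_density 0 t y" for y
  proof -
    have "exp (- y\<^sup>2 / (2 * \<sigma>\<^sup>2)) * exp (- l * y\<^sup>2) = exp (- y\<^sup>2 / (2 * t\<^sup>2))"
      unfolding mult_exp_exp using s q by (simp add: t_def field_simps power2_eq_square)
    moreover have "sqrt (2 * pi * \<sigma>\<^sup>2) = sqrt (2*pi) * \<sigma>" "sqrt (2 * pi * t\<^sup>2) = sqrt (2*pi) * t"
      using s t by (simp_all add: real_sqrt_mult)
    ultimately show ?thesis
      unfolding normal_density_def using q s by (simp add: t_def field_simps)
  qed
  have "(\<integral>\<^sup>+y. ennreal (normal_density 0 \<sigma> y) * ennreal (exp (- l * y\<^sup>2)) \<partial>lborel)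
      = (\<integral>\<^sup>+y. ennreal (1/q) * ennreal (normal_density 0 t y) \<partial>lborel)"
  proof (intro nn_integral_cong)
    fix y
    have "ennreal (normal_density 0 \<sigma> y) * ennreal (exp (- l * y\<^sup>2))
        = ennreal ((1/q) * normal_density 0 t y)"
      by (metis density_product ennreal_mult' normal_density_nonneg)
    also have "\<dots> = ennreal (1/q) * ennreal (normal_density 0 t y)"
      using q by (intro ennreal_mult) auto
    finally show "ennreal (normal_density 0 \<sigma> y) * ennreal (exp (- l * y\<^sup>2))
        = ennreal (1/q) * ennreal (normal_density 0 t y)" .
  qed
  also have "\<dots> = ennreal (1/q) * (\<integral>\<^sup>+y. ennreal (normal_density 0 t y) \<partial>lborel)"
    by (rule nn_integral_cmult) simp
  also have "(\<integral>\<^sup>+y. ennreal (normal_density 0 t y) \<partial>lborel) = 1"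
    by (subst nn_integral_eq_integral) (use t in auto)
  finally show ?thesis by (simp add: q_def)
qed

lemma borel_measurable_sum_column_squares:
  assumes "J \<times> R \<subseteq> D"
  shows "(\<lambda>w. \<Sum>r\<in>R. (\<Sum>j\<in>J. c j * w (j, r))\<^sup>2) \<in> borel_measurable (PiM D (\<lambda>_. std_gaussian))"
  using assms by (intro borel_measurable_sum borel_measurable_power borel_measurable_column_sum) auto

lemma nn_integral_exp_neg_sum_column_squares:
  fixes J :: "'a set" and R :: "'b set"
  assumes D: "finite D" and J: "finite J" "J \<noteq> {}" and R: "finite R" and JR: "J \<times> R \<subseteq> D"
    and c: "\<And>j. j \<in> J \<Longrightarrow> c j \<noteq> 0" and l: "l \<ge> 0"
  shows "(\<integral>\<^sup>+w. exp (- l * (\<Sum>r\<in>R. (\<Sum>j\<in>J. c j * w (j, r))\<^sup>2)) \<partial>PiM D (\<lambda>_. std_gaussian))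
       = ennreal ((1 / sqrt (1 + 2 * l * (\<Sum>j\<in>J. (c j)\<^sup>2))) ^ card R)"
proof -
  interpret prob_space "PiM D (\<lambda>_. std_gaussian)" using prob_space_PiM_std_gaussian[OF D] .
  define Y where "Y r w = (\<Sum>j\<in>J. c j * w (j, r))" for r :: 'b and w
  define s2 where "s2 = (\<Sum>j\<in>J. (c j)\<^sup>2)"
  define q where "q = 1 / sqrt (1 + 2 * l * s2)"
  have s2: "s2 > 0" unfolding s2_def using J c by (intro sum_pos) auto
  have indep: "indep_vars (\<lambda>_. borel) (\<lambda>r w. ennreal (exp (- l * (Y r w)\<^sup>2))) R"
    using indep_vars_compose2[OF indep_vars_column_sums[OF D JR],
        of "\<lambda>_ x. ennreal (exp (- l * x\<^sup>2))" "\<lambda>_. borel"]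
    by (simp add: Y_def)
  have factor: "(\<integral>\<^sup>+w. ennreal (exp (- l * (Y r w)\<^sup>2)) \<partial>PiM D (\<lambda>_. std_gaussian)) = ennreal q"
    if r: "r \<in> R" for r
  proof -
    have "distributed (PiM D (\<lambda>_. std_gaussian)) lborel (Y r) (normal_density 0 (sqrt s2))"
      unfolding Y_def s2_def using JR r c by (intro distributed_column_sum[OF D J]) auto
    then have "(\<integral>\<^sup>+w. ennreal (exp (- l * (Y r w)\<^sup>2)) \<partial>PiM D (\<lambda>_. std_gaussian))
        = (\<integral>\<^sup>+y. ennreal (normal_density 0 (sqrt s2) y) * ennreal (exp (- l * y\<^sup>2)) \<partial>lborel)"
      by (rule distributed_nn_integral[symmetric]) simp
    also have "\<dots> = ennreal q"
      using nn_integral_normal_density_exp_neg_square[of "sqrt s2" l] s2 l by (simp add: q_def)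
    finally show ?thesis .
  qed
  have "(\<integral>\<^sup>+w. exp (- l * (\<Sum>r\<in>R. (Y r w)\<^sup>2)) \<partial>PiM D (\<lambda>_. std_gaussian))
      = (\<integral>\<^sup>+w. (\<Prod>r\<in>R. ennreal (exp (- l * (Y r w)\<^sup>2))) \<partial>PiM D (\<lambda>_. std_gaussian))"
    using R by (simp add: exp_sum sum_distrib_left prod_ennreal)
  also have "\<dots> = (\<Prod>r\<in>R. \<integral>\<^sup>+w. ennreal (exp (- l * (Y r w)\<^sup>2)) \<partial>PiM D (\<lambda>_. std_gaussian))"
    by (rule indep_vars_nn_integral[OF R indep]) simp
  also have "\<dots> = ennreal (q ^ card R)"
    using factor s2 l by (simp add: q_def prod_ennreal ennreal_power)
  finally show ?thesis by (simp add: Y_def q_def s2_def)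
qed

lemma measure_sum_column_squares_le:
  assumes D: "finite D" and J: "finite J" and R: "finite R" and JR: "J \<times> R \<subseteq> D"
    and s2: "(\<Sum>j\<in>J. (c j)\<^sup>2) > 0" and l: "l > 0"
  shows "measure (PiM D (\<lambda>_. std_gaussian))
           {w \<in> space (PiM D (\<lambda>_. std_gaussian)). (\<Sum>r\<in>R. (\<Sum>j\<in>J. c j * w (j, r))\<^sup>2) \<le> T}
         \<le> exp (l * T) * (1 / sqrt (1 + 2 * l * (\<Sum>j\<in>J. (c j)\<^sup>2))) ^ card R"
proof -
  interpret prob_space "PiM D (\<lambda>_. std_gaussian)" using prob_space_PiM_std_gaussian[OF D] .
  define J' where "J' = {j\<in>J. c j \<noteq> 0}"
  define S where "S w = (\<Sum>r\<in>R. (\<Sum>j\<in>J. c j * w (j, r))\<^sup>2)" for w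
  define q where "q = 1 / sqrt (1 + 2 * l * (\<Sum>j\<in>J. (c j)\<^sup>2))"
  have column_sum_J': "(\<Sum>j\<in>J. c j * w (j, r)) = (\<Sum>j\<in>J'. c j * w (j, r))" for w r
    unfolding J'_def using J by (intro sum.mono_neutral_right) auto
  have sum_squares_J': "(\<Sum>j\<in>J. (c j)\<^sup>2) = (\<Sum>j\<in>J'. (c j)\<^sup>2)"
    unfolding J'_def using J by (intro sum.mono_neutral_right) auto
  have "J' \<noteq> {}" using s2 sum_squares_J' by auto
  then have mgf: "(\<integral>\<^sup>+w. exp (- l * S w) \<partial>PiM D (\<lambda>_. std_gaussian)) = ennreal (q ^ card R)"
    unfolding S_def column_sum_J' q_def sum_squares_J' using J D R JR l
    by (intro nn_integral_exp_neg_sum_column_squares) (auto simp: J'_def)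
  have "emeasure (PiM D (\<lambda>_. std_gaussian)) {w \<in> space (PiM D (\<lambda>_. std_gaussian)). S w \<le> T}
      \<le> ennreal (exp (l * T)) * (\<integral>\<^sup>+w. ennreal (exp (- l * S w)) * indicator (space (PiM D (\<lambda>_. std_gaussian))) w
                                      \<partial>PiM D (\<lambda>_. std_gaussian))"
    using borel_measurable_sum_column_squares[OF JR] unfolding S_def[abs_def]
    by (intro Chernoff_ineq_nn_integral_le l) simp_all
  also have "(\<integral>\<^sup>+w. ennreal (exp (- l * S w)) * indicator (space (PiM D (\<lambda>_. std_gaussian))) w
                  \<partial>PiM D (\<lambda>_. std_gaussian)) = ennreal (q ^ card R)"
    unfolding mgf[symmetric] by (intro nn_integral_cong) simp
  also have "ennreal (exp (l * T)) * ennreal (q ^ card R) = ennreal (exp (l * T) * q ^ card R)"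
    by (rule ennreal_mult'[symmetric]) simp
  finally show ?thesis
    using l s2 by (simp add: S_def q_def emeasure_eq_measure ennreal_le_iff)
qed

lemma real_le_sum_squares:
  fixes c :: "nat \<Rightarrow> real"
  assumes "i \<le> n" and "\<forall>j\<in>{1..i}. 1 \<le> c j"
  shows "real i \<le> (\<Sum>j\<in>{1..n}. (c j)\<^sup>2)"
proof -
  have "real i = (\<Sum>j\<in>{1..i}. 1)" by simp
  also have "\<dots> \<le> (\<Sum>j\<in>{1..i}. (c j)\<^sup>2)"
    using assms(2) by (intro sum_mono) (simp add: one_le_power)
  also have "\<dots> \<le> (\<Sum>j\<in>{1..n}. (c j)\<^sup>2)"
    using assms(1) by (intro sum_mono2) auto
  finally show ?thesis .
qed

lemma inverse_sqrt_power_le_exp: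
  assumes "n \<ge> 1"
  shows "(1 / sqrt (1 + 2 * real n)) ^ m \<le> exp (- real m * ln (real n) / 2)"
proof -
  have "1 / sqrt (1 + 2 * real n) \<le> 1 / sqrt (real n)"
    using assms by (intro divide_left_mono) auto
  also have "\<dots> = exp (- ln (real n) / 2)"
    using assms by (simp add: exp_minus powr_half_sqrt[symmetric] powr_def field_simps)
  finally have "(1 / sqrt (1 + 2 * real n)) ^ m \<le> exp (- ln (real n) / 2) ^ m"
    by (intro power_mono) auto
  also have "\<dots> = exp (- real m * ln (real n) / 2)"
    by (simp add: exp_of_nat_mult[symmetric])
  finally show ?thesis .
qed

lemma chernoff_exponent_le:
  fixes n m :: nat and \<alpha> k' s2 :: real
  defines "a \<equiv> \<alpha> * k' / (2 * (k' + 1))"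
  assumes n: "n \<ge> 1" and m: "real m = \<alpha> * real n" and \<alpha>: "\<alpha> > 0" and k': "k' > 0"
    and s2: "s2 > k' * real n"
  shows "exp (real n / s2 * (a * real n * ln (real n))) * (1 / sqrt (1 + 2 * real n)) ^ m
    \<le> exp (- a * real n * ln (real n))"
proof -
  have ln_n: "ln (real n) \<ge> 0" using n by simp
  have a: "a > 0" using \<alpha> k' by (simp add: a_def)
  have kn: "k' * real n > 0" using k' n by simp
  have "real n / s2 * (a * real n * ln (real n)) \<le> real n / (k' * real n) * (a * real n * ln (real n))"
    using s2 kn a ln_n by (intro mult_right_mono divide_left_mono) auto
  also have "\<dots> = a / k' * real n * ln (real n)" using n k' by (simp add: field_simps)
  finally have "exp (real n / s2 * (a * real n * ln (real n))) * (1 / sqrt (1 + 2 * real n)) ^ m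
      \<le> exp (a / k' * real n * ln (real n)) * exp (- real m * ln (real n) / 2)"
    using inverse_sqrt_power_le_exp[OF n] by (intro mult_mono) auto
  also have "\<dots> = exp ((a / k' - \<alpha> / 2) * real n * ln (real n))"
    unfolding mult_exp_exp m by (simp add: algebra_simps)
  also have "a / k' - \<alpha> / 2 = - a"
    using k' by (simp add: a_def divide_simps) (simp add: algebra_simps)
  finally show ?thesis by simp
qed

theorem lemma1:
  fixes \<alpha> k' :: real
  assumes "\<alpha> > 0" and "k' > 0"
  shows "\<exists>n0::nat. \<exists>a::real. a > 0 \<and>
    (\<forall>n m i :: nat. \<forall>c :: nat \<Rightarrow> real.
       n > n0 \<longrightarrow> real m = \<alpha> * real n \<longrightarrow>
       k' * real n < real i \<longrightarrow> i \<le> n \<longrightarrow>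
       (\<forall>j\<in>{1..i}. 1 \<le> c j \<and> c j \<le> 2) \<longrightarrow>
       (\<forall>j\<in>{i<..n}. 0 \<le> c j \<and> c j \<le> 1) \<longrightarrow>
       measure (gaussian_vectors n m)
         {w \<in> space (gaussian_vectors n m).
            (\<Sum>r\<in>{1..m}. (\<Sum>j\<in>{1..n}. c j * w (j, r))\<^sup>2) < a * real n * ln (real n)}
       \<le> exp (- a * real n * ln (real n)))"
proof (intro exI conjI allI impI)
  define a where "a = \<alpha> * k' / (2 * (k' + 1))"
  show "a > 0" using assms by (simp add: a_def)
  fix n m i :: nat and c :: "nat \<Rightarrow> real"
  assume n: "n > 0" and m: "real m = \<alpha> * real n" and i: "k' * real n < real i" "i \<le> n"
    and c: "\<forall>j\<in>{1..i}. 1 \<le> c j \<and> c j \<le> 2" and "\<forall>j\<in>{i<..n}. 0 \<le> c j \<and> c j \<le> 1"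
  \<comment> \<open>only \<open>c\<^sub>j \<ge> 1\<close> for \<open>j \<le> i\<close> is needed; the other coefficients enter through \<open>c\<^sub>j\<^sup>2 \<ge> 0\<close>\<close>
  define S where "S w = (\<Sum>r\<in>{1..m}. (\<Sum>j\<in>{1..n}. c j * w (j, r))\<^sup>2)" for w :: "nat \<times> nat \<Rightarrow> real"
  define s2 where "s2 = (\<Sum>j\<in>{1..n}. (c j)\<^sup>2)"
  define T where "T = a * real n * ln (real n)"
  interpret prob_space "gaussian_vectors n m"
    unfolding gaussian_vectors_def by (intro prob_space_PiM_std_gaussian) simp
  have s2: "k' * real n < s2"
    using real_le_sum_squares[OF i(2)] c i(1) by (fastforce simp: s2_def)
  then have "s2 > 0" using assms n by (smt (verit) mult_pos_pos of_nat_0_less_iff)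
  have "S \<in> borel_measurable (gaussian_vectors n m)"
    unfolding S_def gaussian_vectors_def by (intro borel_measurable_sum_column_squares) simp
  then have "measure (gaussian_vectors n m) {w \<in> space (gaussian_vectors n m). S w < T}
      \<le> measure (gaussian_vectors n m) {w \<in> space (gaussian_vectors n m). S w \<le> T}"
    by (intro finite_measure_mono) auto
  also have "\<dots> \<le> exp (real n / s2 * T) * (1 / sqrt (1 + 2 * (real n / s2) * s2)) ^ card {1..m}"
    unfolding gaussian_vectors_def S_def s2_def using \<open>s2 > 0\<close> n
    by (intro measure_sum_column_squares_le) (auto simp: s2_def)
  also have "\<dots> \<le> exp (- a * real n * ln (real n))"
    using chernoff_exponent_le[of n m \<alpha> k' s2] \<open>s2 > 0\<close> n m assms s2 by (simp add: T_def a_def)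
  finally show "measure (gaussian_vectors n m) {w \<in> space (gaussian_vectors n m).
      (\<Sum>r\<in>{1..m}. (\<Sum>j\<in>{1..n}. c j * w (j, r))\<^sup>2) < a * real n * ln (real n)}
    \<le> exp (- a * real n * ln (real n))" by (simp add: S_def T_def)
qed

end
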